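(* Let $\mu\in\mathbb{R}$, $\alpha>0$, $\lambda_1,\dots,\lambda_n,\lambda^*_1,\dots,\lambda^*_n>0$. Let $X_1,\dots,X_n$ be independent with $X_i\sim\mathrm{Fr\acute{e}}(\mu,\lambda_i,\alpha)$ and $X^*_1,\dots,X^*_n$ independent with $X^*_i\sim\mathrm{Fr\acute{e}}(\mu,\lambda^*_i,\alpha)$. Let $\boldsymbol{v}=(1/\lambda_1,\dots,1/\lambda_n)$ and $\boldsymbol{v}^*=(1/\lambda^*_1,\dots,1/\lambda^*_n)$. If $\sum_{i=1}^{j}v^*_{(i)}\ge\sum_{i=1}^{j}v_{(i)}$ for all $j=1,\dots,n$, then $X_{n:n}\ge_{\rm rh}X^*_{n:n}$.
   Context: $X\sim \mathrm{Fr\acute{e}}(\mu,\lambda,\alpha)$ means distribution function $\exp\{-((x-\mu)/\lambda)^{-\alpha}\}$ for $x>\mu$. $X_{n:n}=\max_i X_i$. $v_{(1)}\le\dots\le v_{(n)}$ are the components of $\boldsymbol{v}$ in increasing order. $X\le_{\rm rh}Y$ means the reversed hazard rate $F'/F$ of $X$ is pointwise $\le$ that of $Y$. *)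

theory Defs
  imports "HOL-Probability.Probability"
begin

definition frechet_cdf :: "real \<Rightarrow> real \<Rightarrow> real \<Rightarrow> real \<Rightarrow> real" where
  "frechet_cdf mu lam alpha x =
     (if x > mu then exp (- (((x - mu) / lam) powr (- alpha))) else 0)"

definition rh_le :: "(real \<Rightarrow> real) \<Rightarrow> (real \<Rightarrow> real) \<Rightarrow> bool" where
  "rh_le F G \<longleftrightarrow> (\<forall>x. 0 < F x \<and> 0 < G x \<longrightarrow> deriv F x / F x \<le> deriv G x / G x)"

definition max_cdf :: "'a measure \<Rightarrow> (nat \<Rightarrow> 'a \<Rightarrow> real) \<Rightarrow> nat \<Rightarrow> real \<Rightarrow> real" where
  "max_cdf M X n x = measure M {\<omega> \<in> space M. Max ((\<lambda>i. X i \<omega>) ` {..<n}) \<le> x}"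

definition sorted_psum :: "(nat \<Rightarrow> real) \<Rightarrow> nat \<Rightarrow> nat \<Rightarrow> real" where
  "sorted_psum v n j = sum_list (take j (sort (map v [0..<n])))"

end

theory Submission
  imports Defs
begin

text \<open>The maximum of independent Fr\'echet variables with common \<open>\<mu>\<close> and \<open>\<alpha>\<close> is again
  Fr\'echet-like: its distribution function is \<open>exp (- S (x - \<mu>) powr (-\<alpha>))\<close> with
  \<open>S = \<Sum> \<lambda>\<^sub>i powr \<alpha> = \<Sum> v\<^sub>i powr (-\<alpha>)\<close>, so its reversed hazard rate is
  \<open>S \<alpha> (x - \<mu>) powr (-\<alpha>-1)\<close> and the order reduces to comparing the two sums \<open>S\<close>.
  That comparison is the Tomi\'c--Weyl inequality for the decreasing convex function
  \<open>t powr (-\<alpha>)\<close> under weak supermajorization: bound each term by the tangent at the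
  sorted \<open>v*\<^sub>(\<^sub>i\<^sub>)\<close> and apply Abel summation, the slopes being increasing in \<open>i\<close>.\<close>

lemma powr_neg_ge_tangent:
  fixes a b alpha :: real
  assumes "a > 0" "b > 0" "alpha > 0"
  shows "a powr (-alpha) - b powr (-alpha) \<ge> (-alpha * b powr (-alpha-1)) * (a - b)"
proof -
  have d1: "((\<lambda>x. x powr (-alpha)) has_real_derivative (-alpha * x powr (-alpha-1))) (at x)"
    if "x \<in> {0<..}" for x
    using that by (auto intro!: derivative_eq_intros)
  have d2: "((\<lambda>x. -alpha * x powr (-alpha-1)) has_real_derivative
      (-alpha * ((-alpha-1) * x powr (-alpha-1-1)))) (at x)" if "x \<in> {0<..}" for x
    using that by (auto intro!: derivative_eq_intros)
  have d2_nonneg: "0 \<le> -alpha * ((-alpha-1) * x powr (-alpha-1-1))" for x :: real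
  proof -
    have "(-alpha-1) * x powr (-alpha-1-1) \<le> 0"
      using assms by (intro mult_nonpos_nonneg) auto
    then show ?thesis
      using assms by (simp add: mult_nonneg_nonpos)
  qed
  have "convex_on {0<..} (\<lambda>x::real. x powr (-alpha))"
    by (rule f''_ge0_imp_convex[OF _ d1 d2 d2_nonneg]) auto
  then show ?thesis
    by (rule convex_on_imp_above_tangent)
      (use assms d1[of b] in \<open>auto simp: interior_open intro: has_field_derivative_at_within\<close>)
qed

lemma sum_mult_le_mult_sum_if_psums_nonneg:
  fixes c d :: "nat \<Rightarrow> real"
  assumes "\<And>i j. i \<le> j \<Longrightarrow> j < m \<Longrightarrow> c i \<le> c j"
    and "\<And>j. j \<le> m \<Longrightarrow> (\<Sum>i<j. d i) \<ge> 0"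
  shows "(\<Sum>i<m. c i * d i) \<le> c (m - 1) * (\<Sum>i<m. d i)"
  using assms
proof (induction m)
  case 0
  then show ?case by simp
next
  case (Suc m)
  have "(\<Sum>i<m. c i * d i) \<le> c (m - 1) * (\<Sum>i<m. d i)"
    using Suc by auto
  also have "\<dots> \<le> c m * (\<Sum>i<m. d i)"
    using Suc.prems by (intro mult_right_mono) auto
  finally show ?case by (simp add: algebra_simps)
qed

lemma sum_powr_neg_le_if_weakly_supermajorized:
  fixes a b :: "nat \<Rightarrow> real"
  assumes "alpha > 0" and "\<forall>i<n. a i > 0" and "\<forall>i<n. b i > 0"
    and sorted_b: "\<forall>i j. i \<le> j \<longrightarrow> j < n \<longrightarrow> b i \<le> b j"
    and psums: "\<forall>j\<le>n. (\<Sum>i<j. a i) \<le> (\<Sum>i<j. b i)"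
  shows "(\<Sum>i<n. b i powr (-alpha)) \<le> (\<Sum>i<n. a i powr (-alpha))"
proof -
  define c where "c i = -alpha * b i powr (-alpha-1)" for i
  have c_mono: "c i \<le> c j" if "i \<le> j" "j < n" for i j
  proof -
    have "b j powr (-alpha-1) \<le> b i powr (-alpha-1)"
      using assms that by (intro powr_mono2') auto
    then show ?thesis unfolding c_def using assms(1) by simp
  qed
  have "(\<Sum>i<n. b i powr (-alpha)) - (\<Sum>i<n. a i powr (-alpha))
      = (\<Sum>i<n. b i powr (-alpha) - a i powr (-alpha))"
    by (simp add: sum_subtractf)
  also have "\<dots> \<le> (\<Sum>i<n. c i * (b i - a i))"
    using powr_neg_ge_tangent assms(1-3)
    by (intro sum_mono) (fastforce simp: c_def algebra_simps)
  also have "\<dots> \<le> c (n - 1) * (\<Sum>i<n. b i - a i)"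
    using c_mono psums by (intro sum_mult_le_mult_sum_if_psums_nonneg) (auto simp: sum_subtractf)
  also have "\<dots> \<le> 0"
    using assms(1) psums by (intro mult_nonpos_nonneg) (auto simp: c_def sum_subtractf)
  finally show ?thesis by simp
qed

lemma sum_sort_map:
  "(\<Sum>i<n. f (sort (map v [0..<n]) ! i)) = (\<Sum>i<n. f (v i))"
proof -
  have "(\<Sum>i<n. f (sort (map v [0..<n]) ! i)) = sum_list (map f (sort (map v [0..<n])))"
    by (simp add: sum_list_sum_nth atLeast0LessThan)
  also have "\<dots> = sum_list (map f (map v [0..<n]))"
    by (metis mset_map mset_sort sum_mset_sum_list)
  finally show ?thesis
    by (simp add: sum_list_sum_nth atLeast0LessThan)
qed

lemma sum_powr_le_if_sorted_psum_inverse_ge: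
  fixes lam lams :: "nat \<Rightarrow> real"
  assumes "alpha > 0" and "\<forall>i<n. lam i > 0" and "\<forall>i<n. lams i > 0"
    and "\<forall>j\<in>{1..n}. sorted_psum (\<lambda>i. 1 / lams i) n j \<ge> sorted_psum (\<lambda>i. 1 / lam i) n j"
  shows "(\<Sum>i<n. lams i powr alpha) \<le> (\<Sum>i<n. lam i powr alpha)"
proof -
  define va where "va = sort (map (\<lambda>i. 1 / lam i) [0..<n])"
  define vb where "vb = sort (map (\<lambda>i. 1 / lams i) [0..<n])"
  have len: "length va = n" "length vb = n"
    by (auto simp: va_def vb_def)
  have inverse_powr: "(1 / l) powr (- alpha) = l powr alpha" if "l > 0" for l :: real
    using that by (simp add: powr_minus_divide powr_divide)
  have "(\<Sum>i<n. (vb ! i) powr (-alpha)) \<le> (\<Sum>i<n. (va ! i) powr (-alpha))"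
  proof (rule sum_powr_neg_le_if_weakly_supermajorized)
    have "va ! i \<in> set va" "vb ! i \<in> set vb" if "i < n" for i
      using that len by auto
    then show "\<forall>i<n. va ! i > 0" "\<forall>i<n. vb ! i > 0"
      using assms(2,3) unfolding va_def vb_def by fastforce+
    show "\<forall>i j. i \<le> j \<longrightarrow> j < n \<longrightarrow> vb ! i \<le> vb ! j"
      using len by (auto simp: vb_def intro!: sorted_nth_mono)
    have "sum_list (take j vs) = (\<Sum>i<j. vs ! i)" if "j \<le> length vs" for j and vs :: "real list"
      using that by (simp add: sum_list_sum_nth atLeast0LessThan min_def)
    then show "\<forall>j\<le>n. (\<Sum>i<j. va ! i) \<le> (\<Sum>i<j. vb ! i)"
      using assms(4) len
      by (auto simp: sorted_psum_def va_def[symmetric] vb_def[symmetric] Suc_le_eq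
          elim!: ballE[where x=j for j] le_neq_implies_less)
  qed fact
  moreover have "(\<Sum>i<n. (va ! i) powr (-alpha)) = (\<Sum>i<n. lam i powr alpha)"
    using sum_sort_map[of "\<lambda>t. t powr (-alpha)" "\<lambda>i. 1 / lam i" n] assms(2) inverse_powr
    by (simp add: va_def)
  moreover have "(\<Sum>i<n. (vb ! i) powr (-alpha)) = (\<Sum>i<n. lams i powr alpha)"
    using sum_sort_map[of "\<lambda>t. t powr (-alpha)" "\<lambda>i. 1 / lams i" n] assms(3) inverse_powr
    by (simp add: vb_def)
  ultimately show ?thesis by simp
qed

text \<open>Fr\'echet distribution function parametrized by \<open>S = \<lambda> powr \<alpha>\<close> instead of \<open>\<lambda>\<close>;
  in this parameter, taking maxima of independent variables adds the \<open>S\<close>.\<close>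
definition frechet_cdf_pow :: "real \<Rightarrow> real \<Rightarrow> real \<Rightarrow> real \<Rightarrow> real" where
  "frechet_cdf_pow mu alpha S x = (if x > mu then exp (- ((x - mu) powr (- alpha) * S)) else 0)"

lemma deriv_frechet_cdf_pow:
  assumes "x > mu"
  shows "deriv (frechet_cdf_pow mu alpha S) x
    = frechet_cdf_pow mu alpha S x * (S * alpha * (x - mu) powr (- alpha - 1))"
proof -
  have "((\<lambda>y. exp (- ((y - mu) powr (- alpha) * S))) has_real_derivative
      exp (- ((x - mu) powr (- alpha) * S)) * (S * alpha * (x - mu) powr (- alpha - 1))) (at x)"
    using assms by (auto intro!: derivative_eq_intros simp: algebra_simps)
  then have "(frechet_cdf_pow mu alpha S has_real_derivative
      exp (- ((x - mu) powr (- alpha) * S)) * (S * alpha * (x - mu) powr (- alpha - 1))) (at x)"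
    by (rule has_field_derivative_transform_within_open[of _ _ _ "{mu<..}"])
      (use assms in \<open>auto simp: frechet_cdf_pow_def\<close>)
  then show ?thesis
    using assms by (simp add: DERIV_imp_deriv frechet_cdf_pow_def)
qed

lemma rh_le_frechet_cdf_pow:
  assumes "alpha > 0" "S' \<le> S"
  shows "rh_le (frechet_cdf_pow mu alpha S') (frechet_cdf_pow mu alpha S)"
  unfolding rh_le_def
proof (intro allI impI)
  fix x
  assume pos: "0 < frechet_cdf_pow mu alpha S' x \<and> 0 < frechet_cdf_pow mu alpha S x"
  then have "x > mu"
    by (auto simp: frechet_cdf_pow_def split: if_splits)
  moreover have "S' * (alpha * (x - mu) powr (- alpha - 1)) \<le> S * (alpha * (x - mu) powr (- alpha - 1))"
    using assms by (intro mult_right_mono) auto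
  ultimately show "deriv (frechet_cdf_pow mu alpha S') x / frechet_cdf_pow mu alpha S' x
      \<le> deriv (frechet_cdf_pow mu alpha S) x / frechet_cdf_pow mu alpha S x"
    using pos by (simp add: deriv_frechet_cdf_pow mult.assoc)
qed

lemma prod_frechet_cdf:
  fixes n :: nat
  assumes "\<forall>i<n. lam i > 0" "n \<ge> 1"
  shows "(\<Prod>i<n. frechet_cdf mu (lam i) alpha x) = frechet_cdf_pow mu alpha (\<Sum>i<n. lam i powr alpha) x"
proof (cases "x > mu")
  case True
  have "((x - mu) / lam i) powr (- alpha) = (x - mu) powr (- alpha) * lam i powr alpha" if "i < n" for i
  proof -
    have "((x - mu) / lam i) powr (- alpha) = (x - mu) powr (- alpha) / lam i powr (- alpha)"
      using True assms that by (simp add: powr_divide)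
    then show ?thesis
      by (simp add: powr_minus divide_inverse)
  qed
  then have "(\<Prod>i<n. frechet_cdf mu (lam i) alpha x)
      = (\<Prod>i<n. exp (- ((x - mu) powr (- alpha) * lam i powr alpha)))"
    using True by (auto simp: frechet_cdf_def intro!: prod.cong)
  also have "\<dots> = exp (\<Sum>i<n. - ((x - mu) powr (- alpha) * lam i powr alpha))"
    by (rule exp_sum[symmetric, OF finite_lessThan])
  finally show ?thesis
    using True by (simp add: frechet_cdf_pow_def sum_distrib_left sum_negf)
next
  case False
  then have "frechet_cdf mu (lam 0) alpha x = 0"
    by (simp add: frechet_cdf_def)
  then show ?thesis
    using False assms by (auto simp: frechet_cdf_pow_def intro!: prod_zero bexI[of _ 0])
qed

lemma max_cdf_indep:
  fixes n :: nat
  assumes "prob_space M" "n \<ge> 1" "prob_space.indep_vars M (\<lambda>_. borel) X {..<n}"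
  shows "max_cdf M X n x = (\<Prod>i<n. measure M {\<omega> \<in> space M. X i \<omega> \<le> x})"
proof -
  interpret prob_space M by fact
  have nonempty: "{..<n} \<noteq> {}"
    using assms(2) by (auto simp: lessThan_empty_iff)
  have "{\<omega> \<in> space M. Max ((\<lambda>i. X i \<omega>) ` {..<n}) \<le> x} = (\<Inter>i<n. X i -` {..x} \<inter> space M)"
    using nonempty by (auto simp: Max_le_iff)
  moreover have "prob (\<Inter>i<n. X i -` {..x} \<inter> space M) = (\<Prod>i<n. prob (X i -` {..x} \<inter> space M))"
  proof (rule indep_setsD)
    show "indep_sets (\<lambda>i. {X i -` A \<inter> space M | A. A \<in> sets borel}) {..<n}"
      using assms(3) unfolding indep_vars_def2 by auto
    show "\<forall>i\<in>{..<n}. X i -` {..x} \<inter> space M \<in> {X i -` A \<inter> space M | A. A \<in> sets borel}"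
      by (intro ballI CollectI exI[of _ "{..x}"]) simp
  qed (use nonempty in simp_all)
  moreover have "X i -` {..x} \<inter> space M = {\<omega> \<in> space M. X i \<omega> \<le> x}" for i
    by auto
  ultimately show ?thesis
    unfolding max_cdf_def by simp
qed

lemma max_cdf_indep_frechet:
  fixes n :: nat
  assumes "prob_space M" "n \<ge> 1" "\<forall>i<n. lam i > 0"
    and "prob_space.indep_vars M (\<lambda>_. borel) X {..<n}"
    and "\<forall>i<n. \<forall>x. measure M {\<omega> \<in> space M. X i \<omega> \<le> x} = frechet_cdf mu (lam i) alpha x"
  shows "max_cdf M X n = frechet_cdf_pow mu alpha (\<Sum>i<n. lam i powr alpha)"
proof
  fix x
  have "max_cdf M X n x = (\<Prod>i<n. frechet_cdf mu (lam i) alpha x)"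
    using assms by (simp add: max_cdf_indep)
  then show "max_cdf M X n x = frechet_cdf_pow mu alpha (\<Sum>i<n. lam i powr alpha) x"
    using assms by (simp add: prod_frechet_cdf)
qed

theorem mainTheorem9:
  fixes M :: "'a measure" and M' :: "'b measure"
    and X :: "nat \<Rightarrow> 'a \<Rightarrow> real" and Xs :: "nat \<Rightarrow> 'b \<Rightarrow> real"
    and n :: nat and mu alpha :: real and lam lams :: "nat \<Rightarrow> real"
  assumes "prob_space M" and "prob_space M'"
    and "n \<ge> 1" and "alpha > 0"
    and "\<forall>i<n. lam i > 0" and "\<forall>i<n. lams i > 0"
    and "prob_space.indep_vars M (\<lambda>_. borel) X {..<n}"
    and "prob_space.indep_vars M' (\<lambda>_. borel) Xs {..<n}"
    and "\<forall>i<n. \<forall>x. measure M {\<omega> \<in> space M. X i \<omega> \<le> x} = frechet_cdf mu (lam i) alpha x"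
    and "\<forall>i<n. \<forall>x. measure M' {\<omega> \<in> space M'. Xs i \<omega> \<le> x} = frechet_cdf mu (lams i) alpha x"
    and "\<forall>j\<in>{1..n}. sorted_psum (\<lambda>i. 1 / lams i) n j \<ge> sorted_psum (\<lambda>i. 1 / lam i) n j"
  shows "rh_le (max_cdf M' Xs n) (max_cdf M X n)"
proof -
  have "max_cdf M X n = frechet_cdf_pow mu alpha (\<Sum>i<n. lam i powr alpha)"
    using assms by (intro max_cdf_indep_frechet) auto
  moreover have "max_cdf M' Xs n = frechet_cdf_pow mu alpha (\<Sum>i<n. lams i powr alpha)"
    using assms by (intro max_cdf_indep_frechet) auto
  moreover have "(\<Sum>i<n. lams i powr alpha) \<le> (\<Sum>i<n. lam i powr alpha)"
    using assms by (intro sum_powr_le_if_sorted_psum_inverse_ge) auto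
  ultimately show ?thesis
    using assms(4) by (simp add: rh_le_frechet_cdf_pow)
qed

end
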